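(* Let $I=\{i_1,\dots,i_r\}\subset[n-1]$ with $0=i_0<i_1<\dots<i_r<i_{r+1}=n$, let $h\in\mathcal H_{I,n}$, and let $1\le k\le r+1$. Put $I'=I\cup\{i_{k-1}+1,\dots,i_k-1\}$ and let $h'\in\mathcal H_{I',n}$ be defined by $h'|_{I\cup\{n\}}=h$ and $h'(i)=h(i_k)$ for $i_{k-1}<i\le i_k$. Then $\mathsf{csf}_q(h')=[i_k-i_{k-1}]_q!\,\mathsf{csf}_q(h)$.
   Context: For $I\subset[n-1]$, $\mathcal H_{I,n}$ is the set of maps $h:I\cup\{n\}\to I\cup\{n\}$ with $h(i)\ge i$ and $h(i)\le h(j)$ for $i<j$ in $I$. For $h\in\mathcal H_{I,n}$ with $I=\{i_1<\dots<i_r\}$, $i_0=0$, $i_{r+1}=n$, the weighted graph of $h$ has vertex set $I\cup\{n\}$, edges $(i,j)$ for $i<j\le h(i)$, and weights $w_h(i_k)=i_k-i_{k-1}$. A proper coloring assigns to each vertex $i$ a subset $\gamma(i)\subset\mathbb N$ with $|\gamma(i)|=w_h(i)$ and $\gamma(i)\cap\gamma(j)=\emptyset$ for every edge $(i,j)$. $\mathsf{csf}_q(h)=\sum_{\gamma\text{ proper}}q^{\mathsf{asc}_h(\gamma)}x_\gamma$ with $x_\gamma=\prod_i\prod_{a\in\gamma(i)}x_a$ and $\mathsf{asc}_h(\gamma)=\sum_{(i,j)\text{ edge}}|\{(a,b)\in\gamma(i)\times\gamma(j):a<b\}|$. $[m]_q!=\prod_{s=1}^m(1+q+\dots+q^{s-1})$.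 *)

theory Defs
  imports Main "HOL-Computational_Algebra.Polynomial"
begin

definition idx :: "nat set \<Rightarrow> nat \<Rightarrow> nat \<Rightarrow> nat" where
  "idx I n j = (if j = 0 then 0
               else if j \<le> card I then sorted_list_of_set I ! (j - 1)
               else n)"

definition Hmaps :: "nat set \<Rightarrow> nat \<Rightarrow> (nat \<Rightarrow> nat) set" where
  "Hmaps I n = {h. (\<forall>i \<in> I \<union> {n}. h i \<in> I \<union> {n} \<and> i \<le> h i)
                  \<and> (\<forall>i \<in> I. \<forall>j \<in> I. i < j \<longrightarrow> h i \<le> h j)}"

definition wt :: "nat set \<Rightarrow> nat \<Rightarrow> nat" where
  "wt I v = v - Max ({0} \<union> {i \<in> I. i < v})"

definition hedge :: "nat set \<Rightarrow> nat \<Rightarrow> (nat \<Rightarrow> nat) \<Rightarrow> nat \<Rightarrow> nat \<Rightarrow> bool" where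
  "hedge I n h i j \<longleftrightarrow> i \<in> I \<union> {n} \<and> j \<in> I \<union> {n} \<and> i < j \<and> j \<le> h i"

definition proper_colorings :: "nat set \<Rightarrow> nat \<Rightarrow> (nat \<Rightarrow> nat) \<Rightarrow> (nat \<Rightarrow> nat set) set" where
  "proper_colorings I n h = {\<gamma>.
     (\<forall>v. v \<notin> I \<union> {n} \<longrightarrow> \<gamma> v = {}) \<and>
     (\<forall>v \<in> I \<union> {n}. finite (\<gamma> v) \<and> card (\<gamma> v) = wt I v \<and> 0 \<notin> \<gamma> v) \<and>
     (\<forall>i j. hedge I n h i j \<longrightarrow> \<gamma> i \<inter> \<gamma> j = {})}"

text \<open>Exponent vector of the monomial x_gamma.\<close>
definition xexp :: "nat set \<Rightarrow> nat \<Rightarrow> (nat \<Rightarrow> nat set) \<Rightarrow> nat \<Rightarrow> nat" where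
  "xexp I n \<gamma> a = card {v \<in> I \<union> {n}. a \<in> \<gamma> v}"

definition asc :: "nat set \<Rightarrow> nat \<Rightarrow> (nat \<Rightarrow> nat) \<Rightarrow> (nat \<Rightarrow> nat set) \<Rightarrow> nat" where
  "asc I n h \<gamma> = (\<Sum>(i,j) \<in> {(i,j). hedge I n h i j}.
                     card {(a,b). a \<in> \<gamma> i \<and> b \<in> \<gamma> j \<and> a < b})"

text \<open>csf_q(h), represented by its coefficient map: monomial exponent vector \<mapsto>
  polynomial in q.\<close>
definition csf :: "nat set \<Rightarrow> nat \<Rightarrow> (nat \<Rightarrow> nat) \<Rightarrow> (nat \<Rightarrow> nat) \<Rightarrow> int poly" where
  "csf I n h \<alpha> = (\<Sum>\<gamma> \<in> {\<gamma> \<in> proper_colorings I n h. xexp I n \<gamma> = \<alpha>}.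
                     monom 1 (asc I n h \<gamma>))"

definition qint :: "nat \<Rightarrow> int poly" where
  "qint s = (\<Sum>t<s. monom 1 t)"

definition qfact :: "nat \<Rightarrow> int poly" where
  "qfact m = (\<Prod>s=1..m. qint s)"

end

theory Submission
  imports Defs "HOL-Library.FuncSet"
begin

(*
  In h' the block {i_(k-1)+1, ..., i_k} consists of vertices of weight one that form a clique,
  and each of them has exactly the outer neighbours that i_k has in h. Hence a proper coloring
  of h' amounts to a proper coloring gamma of h together with a bijection f from the block onto
  gamma(i_k): collapsing the block gives back i_k colored by the union of the block's colors.
  This correspondence preserves the monomial x_gamma, and the ascents of the coloring of h' are
  those of gamma plus the pairs u < v in the block with f u < f v. Summing q to the number of
  such pairs over all bijections between two m-element chains gives [m]_q!, as one sees by
  fixing the image of the largest element.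
*)

lemma sum_bij_betw_Sigma:
  assumes bij: "bij_betw F (SIGMA x:A. B x) C"
    and fin: "\<And>x. x \<in> A \<Longrightarrow> finite (B x)" and ne: "\<And>x. x \<in> A \<Longrightarrow> B x \<noteq> {}"
  shows "sum g C = (\<Sum>x\<in>A. \<Sum>y\<in>B x. g (F (x, y)))"
proof (cases "finite A")
  case True
  have "sum g C = (\<Sum>p\<in>(SIGMA x:A. B x). g (F p))"
    using sum.reindex_bij_betw[OF bij] by metis
  also have "\<dots> = (\<Sum>x\<in>A. \<Sum>y\<in>B x. g (F (x, y)))"
    using True fin by (simp add: sum.Sigma)
  finally show ?thesis .
next
  case False
  have "fst ` (SIGMA x:A. B x) = A"
    using ne by force
  then have "infinite C"
    using False bij_betw_finite[OF bij] by (metis finite_imageI)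
  then show ?thesis
    using False by simp
qed

section \<open>Coinversions of bijections\<close>

lemma qfact_Suc: "qfact (Suc m) = qint (Suc m) * qfact m"
  unfolding qfact_def by (simp add: prod.nat_ivl_Suc')

lemma qint_Suc: "qint (Suc m) = qint m + monom 1 m"
  unfolding qint_def by simp

lemma sum_monom_card_less:
  fixes S :: "'a::linorder set"
  assumes "finite S"
  shows "(\<Sum>s\<in>S. monom 1 (card {t\<in>S. t < s})) = qint (card S)"
  using assms
proof (induction S rule: finite_linorder_max_induct)
  case empty
  then show ?case by (simp add: qint_def)
next
  case (insert w S)
  then have "w \<notin> S" by auto
  have "(\<Sum>s\<in>insert w S. monom 1 (card {t \<in> insert w S. t < s}))
      = monom 1 (card {t \<in> insert w S. t < w}) + (\<Sum>s\<in>S. monom 1 (card {t \<in> insert w S. t < s}))"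
    using insert.hyps \<open>w \<notin> S\<close> by (intro sum.insert)
  also have "{t \<in> insert w S. t < w} = S"
    using insert.hyps by auto
  also have "(\<Sum>s\<in>S. monom 1 (card {t \<in> insert w S. t < s}))
      = (\<Sum>s\<in>S. monom 1 (card {t \<in> S. t < s}))"
  proof (rule sum.cong[OF refl])
    fix s assume "s \<in> S"
    then have "{t \<in> insert w S. t < s} = {t \<in> S. t < s}"
      using insert.hyps by auto
    then show "monom 1 (card {t \<in> insert w S. t < s}) = monom 1 (card {t \<in> S. t < s})"
      by simp
  qed
  also have "\<dots> = qint (card S)"
    by (rule insert.IH)
  finally show ?case
    using insert.hyps \<open>w \<notin> S\<close> by (simp add: qint_Suc add.commute)
qed

definition bijections :: "'a set \<Rightarrow> 'b set \<Rightarrow> ('a \<Rightarrow> 'b) set" where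
  "bijections K S = {f \<in> extensional K. bij_betw f K S}"

definition coinversions :: "('a::linorder \<Rightarrow> 'b::linorder) \<Rightarrow> 'a set \<Rightarrow> nat" where
  "coinversions f K = card {(u, v) \<in> K \<times> K. u < v \<and> f u < f v}"

lemma bijectionsD:
  assumes "f \<in> bijections K S"
  shows "f ` K = S" "inj_on f K" "f \<in> extensional K"
  using assms unfolding bijections_def bij_betw_def by auto

lemma finite_bijections: "finite K \<Longrightarrow> finite S \<Longrightarrow> finite (bijections K S)"
  unfolding bijections_def bij_betw_def
  by (rule finite_subset[OF _ finite_PiE[of K "\<lambda>_. S"]]) (auto simp: PiE_iff extensional_def)

lemma bijections_nonempty:
  assumes "finite K" "finite S" "card K = card S"
  shows "bijections K S \<noteq> {}"
proof -
  obtain g where "bij_betw g K S"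
    using finite_same_card_bij[OF assms] by blast
  then have "restrict g K \<in> bijections K S"
    unfolding bijections_def by simp
  then show ?thesis by blast
qed

lemma bij_betw_bijections_fun_upd:
  assumes "w \<notin> K" "s \<in> S"
  shows "bij_betw (\<lambda>g. g(w := s)) (bijections K (S - {s})) {f \<in> bijections (insert w K) S. f w = s}"
proof (rule bij_betw_byWitness[where f' = "\<lambda>f. f(w := undefined)"])
  show "\<forall>g\<in>bijections K (S - {s}). (g(w := s))(w := undefined) = g"
    using assms by (auto simp: bijections_def extensional_def)
  show "\<forall>f\<in>{f \<in> bijections (insert w K) S. f w = s}. (f(w := undefined))(w := s) = f"
    by auto
  show "(\<lambda>g. g(w := s)) ` bijections K (S - {s}) \<subseteq> {f \<in> bijections (insert w K) S. f w = s}"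
  proof (rule image_subsetI)
    fix g assume g: "g \<in> bijections K (S - {s})"
    have "bij_betw (g(w := s)) K (S - {s}) = bij_betw g K (S - {s})"
      using assms by (intro bij_betw_cong) auto
    then have "bij_betw (g(w := s)) (K \<union> {w}) ((S - {s}) \<union> {(g(w := s)) w})"
      using g assms by (intro notIn_Un_bij_betw) (auto simp: bijections_def)
    then have "bij_betw (g(w := s)) (insert w K) S"
      using assms by (simp add: insert_absorb)
    moreover have "g(w := s) \<in> extensional (insert w K)"
      using g by (auto simp: bijections_def extensional_def)
    ultimately show "g(w := s) \<in> {f \<in> bijections (insert w K) S. f w = s}"
      by (simp add: bijections_def)
  qed
  show "(\<lambda>f. f(w := undefined)) ` {f \<in> bijections (insert w K) S. f w = s} \<subseteq> bijections K (S - {s})"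
  proof (rule image_subsetI)
    fix f assume "f \<in> {f \<in> bijections (insert w K) S. f w = s}"
    then have f: "f \<in> bijections (insert w K) S" "f w = s" by auto
    then have "bij_betw f (insert w K - {w}) (S - {s})"
      using assms by (intro bij_betw_DiffI[OF _ bij_betw_singletonI]) (auto simp: bijections_def)
    moreover have "bij_betw (f(w := undefined)) K (S - {s}) = bij_betw f K (S - {s})"
      using assms by (intro bij_betw_cong) auto
    moreover have "f(w := undefined) \<in> extensional K"
      using f by (auto simp: bijections_def extensional_def)
    ultimately show "f(w := undefined) \<in> bijections K (S - {s})"
      using assms by (simp add: bijections_def)
  qed
qed

lemma coinversions_fun_upd_max:
  assumes g: "g \<in> bijections K (S - {s})" and w: "\<forall>u\<in>K. u < w" and "s \<in> S" "finite K"
  shows "coinversions (g(w := s)) (insert w K) = coinversions g K + card {t \<in> S. t < s}"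
proof -
  let ?old = "{(u, v) \<in> K \<times> K. u < v \<and> g u < g v}"
  let ?new = "(\<lambda>u. (u, w)) ` {u \<in> K. g u < s}"
  have "w \<notin> K"
    using w by auto
  have split: "{(u, v) \<in> insert w K \<times> insert w K. u < v \<and> (g(w := s)) u < (g(w := s)) v}
      = ?old \<union> ?new"
  proof (intro equalityI subsetI)
    fix e assume "e \<in> {(u, v) \<in> insert w K \<times> insert w K. u < v \<and> (g(w := s)) u < (g(w := s)) v}"
    then show "e \<in> ?old \<union> ?new"
      using w \<open>w \<notin> K\<close> by (fastforce split: if_splits)
  next
    fix e assume "e \<in> ?old \<union> ?new"
    then show "e \<in> {(u, v) \<in> insert w K \<times> insert w K. u < v \<and> (g(w := s)) u < (g(w := s)) v}"
      using w \<open>w \<notin> K\<close> by fastforce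
  qed
  have "card ?new = card {u \<in> K. g u < s}"
    by (rule card_image) (simp add: inj_on_def)
  also have "\<dots> = card (g ` {u \<in> K. g u < s})"
    using bijectionsD(2)[OF g] by (intro card_image[symmetric]) (auto simp: inj_on_def)
  also have "g ` {u \<in> K. g u < s} = {t \<in> g ` K. t < s}"
    by auto
  also have "\<dots> = {t \<in> S. t < s}"
    using bijectionsD(1)[OF g] by auto
  finally have "card ?new = card {t \<in> S. t < s}" .
  moreover have "finite ?old"
    using \<open>finite K\<close> by (auto intro: finite_subset[of _ "K \<times> K"])
  then have "card (?old \<union> ?new) = card ?old + card ?new"
    using \<open>finite K\<close> \<open>w \<notin> K\<close> by (intro card_Un_disjoint) auto
  ultimately show ?thesis
    unfolding coinversions_def split by simp
qed

lemma sum_coinversions_bijections: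
  fixes K :: "'a::linorder set" and S :: "'b::linorder set"
  assumes "finite K" "finite S" "card K = card S"
  shows "(\<Sum>f\<in>bijections K S. monom 1 (coinversions f K)) = qfact (card K)"
  using assms
proof (induction K arbitrary: S rule: finite_linorder_max_induct)
  case empty
  then have empty_bij: "bijections {} S = {\<lambda>_. undefined}"
    by (auto simp: bijections_def extensional_def bij_betw_def)
  show ?case
    unfolding empty_bij by (simp add: coinversions_def qfact_def)
next
  case (insert w K)
  let ?q = "\<lambda>f K. monom (1::int) (coinversions f K)"
  let ?rank = "\<lambda>s. monom (1::int) (card {t \<in> S. t < s})"
  have "w \<notin> K"
    using insert.hyps by auto
  have "(\<Sum>f\<in>bijections (insert w K) S. ?q f (insert w K))
      = (\<Sum>s\<in>S. \<Sum>f\<in>{f \<in> bijections (insert w K) S. f w = s}. ?q f (insert w K))"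
    using insert.hyps insert.prems
    by (intro sum.group[symmetric] finite_bijections) (auto simp: bijections_def bij_betw_def)
  also have "\<dots> = (\<Sum>s\<in>S. \<Sum>g\<in>bijections K (S - {s}). ?q (g(w := s)) (insert w K))"
    using \<open>w \<notin> K\<close>
    by (intro sum.cong refl sum.reindex_bij_betw[symmetric] bij_betw_bijections_fun_upd)
  also have "\<dots> = (\<Sum>s\<in>S. \<Sum>g\<in>bijections K (S - {s}). ?rank s * ?q g K)"
    using insert.hyps
    by (intro sum.cong refl) (simp add: coinversions_fun_upd_max mult_monom add.commute)
  also have "\<dots> = (\<Sum>s\<in>S. ?rank s * (\<Sum>g\<in>bijections K (S - {s}). ?q g K))"
    by (simp add: sum_distrib_left)
  also have "\<dots> = (\<Sum>s\<in>S. ?rank s * qfact (card K))"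
    using insert.IH insert.prems(1) insert.prems(2)[symmetric] \<open>w \<notin> K\<close> insert.hyps
    by (intro sum.cong refl) (simp add: card_Diff_singleton)
  also have "\<dots> = qint (card S) * qfact (card K)"
    using insert.prems by (simp add: sum_distrib_right[symmetric] sum_monom_card_less)
  finally show ?case
    using insert.hyps insert.prems(2)[symmetric] \<open>w \<notin> K\<close> by (simp add: qfact_Suc)
qed

section \<open>Proper colorings and their ascent pairs\<close>

lemma proper_coloringsI:
  assumes "\<And>v. v \<notin> I \<union> {n} \<Longrightarrow> \<gamma> v = {}"
    and "\<And>v. v \<in> I \<union> {n} \<Longrightarrow> finite (\<gamma> v) \<and> card (\<gamma> v) = wt I v \<and> 0 \<notin> \<gamma> v"
    and "\<And>i j. hedge I n h i j \<Longrightarrow> \<gamma> i \<inter> \<gamma> j = {}"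
  shows "\<gamma> \<in> proper_colorings I n h"
  using assms unfolding proper_colorings_def by auto

lemma proper_coloringsD:
  assumes "\<gamma> \<in> proper_colorings I n h"
  shows "v \<notin> I \<union> {n} \<Longrightarrow> \<gamma> v = {}"
    and "v \<in> I \<union> {n} \<Longrightarrow> finite (\<gamma> v)"
    and "v \<in> I \<union> {n} \<Longrightarrow> card (\<gamma> v) = wt I v"
    and "v \<in> I \<union> {n} \<Longrightarrow> 0 \<notin> \<gamma> v"
    and "hedge I n h i j \<Longrightarrow> \<gamma> i \<inter> \<gamma> j = {}"
  using assms unfolding proper_colorings_def by auto

definition ascent_pairs ::
    "nat set \<Rightarrow> nat \<Rightarrow> (nat \<Rightarrow> nat) \<Rightarrow> (nat \<Rightarrow> nat set) \<Rightarrow> ((nat \<times> nat) \<times> nat \<times> nat) set" where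
  "ascent_pairs I n h \<gamma> =
     Sigma {(i, j). hedge I n h i j} (\<lambda>(i, j). {(a, b). a \<in> \<gamma> i \<and> b \<in> \<gamma> j \<and> a < b})"

lemma mem_ascent_pairs [simp]:
  "((i, j), (x, y)) \<in> ascent_pairs I n h \<gamma> \<longleftrightarrow> hedge I n h i j \<and> x \<in> \<gamma> i \<and> y \<in> \<gamma> j \<and> x < y"
  unfolding ascent_pairs_def by auto

lemma
  assumes "finite I" "\<gamma> \<in> proper_colorings I n h"
  shows finite_ascent_pairs: "finite (ascent_pairs I n h \<gamma>)"
    and asc_eq_card_ascent_pairs: "asc I n h \<gamma> = card (ascent_pairs I n h \<gamma>)"
proof -
  have edges: "finite {(i, j). hedge I n h i j}"
    using assms(1) by (auto intro: finite_subset[of _ "(I \<union> {n}) \<times> (I \<union> {n})"] simp: hedge_def)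
  have pairs: "finite {(a, b). a \<in> \<gamma> i \<and> b \<in> \<gamma> j \<and> a < b}" if "hedge I n h i j" for i j
    using that proper_coloringsD(2)[OF assms(2)]
    by (auto intro: finite_subset[of _ "\<gamma> i \<times> \<gamma> j"] simp: hedge_def)
  show "finite (ascent_pairs I n h \<gamma>)"
    unfolding ascent_pairs_def using edges pairs by (intro finite_SigmaI) auto
  show "asc I n h \<gamma> = card (ascent_pairs I n h \<gamma>)"
    unfolding ascent_pairs_def asc_def using edges pairs
    by (subst card_SigmaI) (auto intro: sum.cong)
qed

section \<open>Refining a vertex into a block\<close>

text \<open>The parameters a and b play the roles of i_(k-1) and i_k: the vertex b of h is
  replaced by the block {a<..b} of weight-one vertices.\<close>

locale block_refinement =
  fixes I :: "nat set" and n a b :: nat and h :: "nat \<Rightarrow> nat"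
  assumes I_range: "I \<subseteq> {1..<n}"
    and a_less_b: "a < b"
    and b_vertex: "b \<in> I \<union> {n}"
    and a_cases: "a = 0 \<or> a \<in> I"
    and no_vertex_between: "\<And>v. v \<in> I \<union> {n} \<Longrightarrow> v \<le> a \<or> b \<le> v"
    and h_vertex: "\<And>v. v \<in> I \<union> {n} \<Longrightarrow> h v \<in> I \<union> {n}"
    and b_le_h_b: "b \<le> h b"
begin

definition block :: "nat set" where
  "block = {a<..b}"

definition I' :: "nat set" where
  "I' = I \<union> {a + 1..<b}"

definition h' :: "nat \<Rightarrow> nat" where
  "h' = (\<lambda>i. if a < i \<and> i \<le> b then h b else h i)"

definition contract :: "nat \<Rightarrow> nat" where
  "contract v = (if v \<in> block then b else v)"

lemma finite_I: "finite I"
  using I_range finite_subset by blast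

lemma finite_I': "finite I'"
  unfolding I'_def using finite_I by simp

lemma finite_block: "finite block"
  unfolding block_def by simp

lemma card_block: "card block = b - a"
  unfolding block_def by simp

lemma b_in_block: "b \<in> block"
  using a_less_b unfolding block_def by simp

lemma block_subset: "block \<subseteq> I' \<union> {n}"
  using b_vertex unfolding block_def I'_def by auto

lemma vertices_subset: "I \<union> {n} \<subseteq> I' \<union> {n}"
  unfolding I'_def by auto

lemma refined_vertex_outside_block: "v \<in> I' \<union> {n} \<Longrightarrow> v \<notin> block \<Longrightarrow> v \<in> I \<union> {n}"
  unfolding block_def I'_def by auto

lemma vertex_in_block_iff: "v \<in> I \<union> {n} \<Longrightarrow> v \<in> block \<longleftrightarrow> v = b"
  using no_vertex_between[of v] b_in_block unfolding block_def by auto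

lemma h'_block: "v \<in> block \<Longrightarrow> h' v = h b"
  unfolding block_def h'_def by auto

lemma h'_outside_block: "v \<notin> block \<Longrightarrow> h' v = h v"
  unfolding block_def h'_def by auto

lemma contract_vertex: "v \<in> I' \<union> {n} \<Longrightarrow> contract v \<in> I \<union> {n}"
  using b_vertex refined_vertex_outside_block unfolding contract_def by auto

lemma wt_b: "wt I b = b - a"
proof -
  have "Max ({0} \<union> {i \<in> I. i < b}) = a"
    using a_cases a_less_b no_vertex_between finite_I by (intro Max_eqI) fastforce+
  then show ?thesis
    unfolding wt_def by simp
qed

lemma wt_refined_block: "v \<in> block \<Longrightarrow> wt I' v = 1"
proof -
  assume "v \<in> block"
  then have "a < v" "v \<le> b"
    unfolding block_def by auto
  moreover have "v - 1 \<in> {0} \<union> {i \<in> I'. i < v}"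
    using a_cases \<open>a < v\<close> \<open>v \<le> b\<close> by (cases "v - 1 = a") (auto simp: I'_def)
  ultimately have "Max ({0} \<union> {i \<in> I'. i < v}) = v - 1"
    using finite_I' by (intro Max_eqI) auto
  then show ?thesis
    using \<open>a < v\<close> unfolding wt_def by simp
qed

lemma wt_refined_outside_block:
  assumes "v \<in> I \<union> {n}" "v \<notin> block"
  shows "wt I' v = wt I v"
proof (cases "v \<le> a")
  case True
  then have "{i \<in> I'. i < v} = {i \<in> I. i < v}"
    unfolding I'_def by auto
  then show ?thesis
    unfolding wt_def by simp
next
  case False
  then have "b < v"
    using assms unfolding block_def by auto
  then have "b \<in> I"
    using assms b_vertex I_range by auto
  have "{i \<in> I'. i < v} = {i \<in> I. i < v} \<union> {a + 1..<b}"
    using \<open>b < v\<close> unfolding I'_def by auto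
  moreover have "Max ({0} \<union> {i \<in> I. i < v} \<union> {a + 1..<b}) = Max ({0} \<union> {i \<in> I. i < v})"
  proof (rule Max_eqI)
    let ?M = "Max ({0} \<union> {i \<in> I. i < v})"
    have fin: "finite ({0} \<union> {i \<in> I. i < v})"
      using finite_I by simp
    have "b \<le> ?M"
      using \<open>b \<in> I\<close> \<open>b < v\<close> fin by (intro Max_ge) auto
    then show "y \<le> ?M" if "y \<in> {0} \<union> {i \<in> I. i < v} \<union> {a + 1..<b}" for y
      using that fin Max_ge[OF fin, of y] by auto
    show "?M \<in> {0} \<union> {i \<in> I. i < v} \<union> {a + 1..<b}"
      using Max_in[OF fin] by auto
  qed (use finite_I in simp)
  ultimately show ?thesis
    unfolding wt_def by (simp add: Un_assoc)
qed

lemma outside_block_cases: "v \<notin> block \<Longrightarrow> v \<le> a \<or> b < v"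
  unfolding block_def by auto

lemma hedge_refined_iff:
  "hedge I' n h' i j \<longleftrightarrow>
     (if i \<in> block \<and> j \<in> block then i < j else hedge I n h (contract i) (contract j))"
proof (cases "i \<in> block"; cases "j \<in> block")
  assume "i \<in> block" "j \<in> block"
  then have "j \<le> h' i"
    using b_le_h_b h'_block by (auto simp: block_def)
  then show ?thesis
    using \<open>i \<in> block\<close> \<open>j \<in> block\<close> block_subset by (auto simp: hedge_def)
next
  assume "i \<in> block" "j \<notin> block"
  then show ?thesis
    using b_vertex vertices_subset block_subset refined_vertex_outside_block[of j]
      outside_block_cases[of j] h'_block[of i]
    by (auto simp: hedge_def contract_def block_def)
next
  assume "i \<notin> block" "j \<in> block"
  have "b \<le> h i" if "i \<in> I \<union> {n}" "a < h i"
    using no_vertex_between[OF h_vertex[OF that(1)]] that(2) by auto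
  then show ?thesis
    using \<open>i \<notin> block\<close> \<open>j \<in> block\<close> b_vertex vertices_subset block_subset
      refined_vertex_outside_block[of i] outside_block_cases[of i] h'_outside_block[of i]
    by (auto simp: hedge_def contract_def block_def)
next
  assume "i \<notin> block" "j \<notin> block"
  then show ?thesis
    using vertices_subset refined_vertex_outside_block h'_outside_block
    by (auto simp: hedge_def contract_def)
qed

definition expand :: "(nat \<Rightarrow> nat set) \<Rightarrow> (nat \<Rightarrow> nat) \<Rightarrow> nat \<Rightarrow> nat set" where
  "expand \<gamma> f v = (if v \<in> block then {f v} else \<gamma> v)"

lemma expand_subset_contract:
  assumes "f \<in> bijections block (\<gamma> b)"
  shows "expand \<gamma> f v \<subseteq> \<gamma> (contract v)"
  using bijectionsD(1)[OF assms] unfolding expand_def contract_def by auto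

lemma contract_eq_imp_eq:
  assumes f: "f \<in> bijections block S"
    and "x \<in> expand \<gamma> f u" "x \<in> expand \<gamma> f v" "contract u = contract v"
  shows "u = v"
  using assms b_in_block bijectionsD(2)[OF f]
  unfolding expand_def contract_def inj_on_def by (auto split: if_splits)

lemma expand_lift:
  assumes f: "f \<in> bijections block (\<gamma> b)" and "v \<in> I \<union> {n}" "x \<in> \<gamma> v"
  obtains u where "u \<in> I' \<union> {n}" "contract u = v" "x \<in> expand \<gamma> f u"
proof (cases "v = b")
  case True
  then obtain u where "u \<in> block" "x = f u"
    using assms(3) bijectionsD(1)[OF f] by blast
  then show ?thesis
    using that[of u] True block_subset unfolding contract_def expand_def by auto
next
  case False
  then have "v \<notin> block"
    using vertex_in_block_iff[OF assms(2)] by simp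
  then show ?thesis
    using that[of v] assms(2,3) vertices_subset unfolding contract_def expand_def by auto
qed

lemma expand_proper:
  assumes \<gamma>: "\<gamma> \<in> proper_colorings I n h" and f: "f \<in> bijections block (\<gamma> b)"
  shows "expand \<gamma> f \<in> proper_colorings I' n h'"
proof (rule proper_coloringsI)
  fix v assume "v \<notin> I' \<union> {n}"
  then show "expand \<gamma> f v = {}"
    using block_subset vertices_subset proper_coloringsD(1)[OF \<gamma>]
    unfolding expand_def by auto
next
  fix v assume v: "v \<in> I' \<union> {n}"
  show "finite (expand \<gamma> f v) \<and> card (expand \<gamma> f v) = wt I' v \<and> 0 \<notin> expand \<gamma> f v"
  proof (cases "v \<in> block")
    case True
    then have "f v \<in> \<gamma> b"
      using bijectionsD(1)[OF f] by blast
    then have "0 \<notin> {f v}"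
      using proper_coloringsD(4)[OF \<gamma> b_vertex] by (metis singletonD)
    then show ?thesis
      using True wt_refined_block unfolding expand_def by simp
  next
    case False
    then show ?thesis
      using v refined_vertex_outside_block wt_refined_outside_block proper_coloringsD(2-4)[OF \<gamma>]
      unfolding expand_def by auto
  qed
next
  fix i j assume "hedge I' n h' i j"
  then show "expand \<gamma> f i \<inter> expand \<gamma> f j = {}"
  proof (cases "i \<in> block \<and> j \<in> block")
    case True
    then show ?thesis
      using \<open>hedge I' n h' i j\<close> bijectionsD(2)[OF f]
      unfolding hedge_refined_iff expand_def inj_on_def by auto
  next
    case False
    then have "\<gamma> (contract i) \<inter> \<gamma> (contract j) = {}"
      using \<open>hedge I' n h' i j\<close> proper_coloringsD(5)[OF \<gamma>] unfolding hedge_refined_iff by auto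
    then show ?thesis
      using expand_subset_contract[where \<gamma> = \<gamma>, OF f] by blast
  qed
qed

lemma bij_betw_contract_colored:
  assumes f: "f \<in> bijections block (\<gamma> b)"
  shows "bij_betw contract {v \<in> I' \<union> {n}. x \<in> expand \<gamma> f v} {v \<in> I \<union> {n}. x \<in> \<gamma> v}"
proof (rule bij_betw_imageI)
  show "inj_on contract {v \<in> I' \<union> {n}. x \<in> expand \<gamma> f v}"
    using contract_eq_imp_eq[OF f] by (auto intro: inj_onI)
  show "contract ` {v \<in> I' \<union> {n}. x \<in> expand \<gamma> f v} = {v \<in> I \<union> {n}. x \<in> \<gamma> v}"
  proof
    show "contract ` {v \<in> I' \<union> {n}. x \<in> expand \<gamma> f v} \<subseteq> {v \<in> I \<union> {n}. x \<in> \<gamma> v}"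
      using contract_vertex expand_subset_contract[where \<gamma> = \<gamma>, OF f] by blast
    show "{v \<in> I \<union> {n}. x \<in> \<gamma> v} \<subseteq> contract ` {v \<in> I' \<union> {n}. x \<in> expand \<gamma> f v}"
    proof
      fix v assume "v \<in> {v \<in> I \<union> {n}. x \<in> \<gamma> v}"
      then obtain u where "u \<in> I' \<union> {n}" "contract u = v" "x \<in> expand \<gamma> f u"
        using expand_lift[where \<gamma> = \<gamma>, OF f] by blast
      then show "v \<in> contract ` {v \<in> I' \<union> {n}. x \<in> expand \<gamma> f v}"
        by blast
    qed
  qed
qed

lemma xexp_expand:
  assumes "f \<in> bijections block (\<gamma> b)"
  shows "xexp I' n (expand \<gamma> f) = xexp I n \<gamma>"
  unfolding xexp_def using bij_betw_same_card[OF bij_betw_contract_colored[where \<gamma> = \<gamma>, OF assms]] by simp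

lemma card_ascent_pairs_within_block:
  assumes f: "f \<in> bijections block S"
  shows "card {e \<in> ascent_pairs I' n h' (expand \<gamma> f). fst (fst e) \<in> block \<and> snd (fst e) \<in> block}
    = coinversions f block"
proof -
  let ?pair = "\<lambda>(u, v). ((u, v), (f u, f v))"
  have "{e \<in> ascent_pairs I' n h' (expand \<gamma> f). fst (fst e) \<in> block \<and> snd (fst e) \<in> block}
      = ?pair ` {(u, v) \<in> block \<times> block. u < v \<and> f u < f v}"
    by (auto simp: hedge_refined_iff expand_def image_iff)
  moreover have "inj_on ?pair {(u, v) \<in> block \<times> block. u < v \<and> f u < f v}"
    by (auto intro: inj_onI)
  ultimately show ?thesis
    unfolding coinversions_def by (simp add: card_image)
qed

lemma bij_betw_contract_ascent_pairs:
  assumes \<gamma>: "\<gamma> \<in> proper_colorings I n h" and f: "f \<in> bijections block (\<gamma> b)"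
  shows "bij_betw (map_prod (map_prod contract contract) id)
    {e \<in> ascent_pairs I' n h' (expand \<gamma> f). \<not> (fst (fst e) \<in> block \<and> snd (fst e) \<in> block)}
    (ascent_pairs I n h \<gamma>)"
    (is "bij_betw ?c ?A ?B")
proof (rule bij_betw_imageI)
  show "inj_on ?c ?A"
  proof (rule inj_onI)
    fix e e' assume "e \<in> ?A" "e' \<in> ?A" "?c e = ?c e'"
    moreover obtain i j x y i' j' x' y' where "e = ((i, j), (x, y))" "e' = ((i', j'), (x', y'))"
      by (metis prod.collapse)
    ultimately show "e = e'"
      using contract_eq_imp_eq[OF f] by auto
  qed
  show "?c ` ?A = ?B"
  proof
    show "?c ` ?A \<subseteq> ?B"
      using expand_subset_contract[where \<gamma> = \<gamma>, OF f] by (auto simp: hedge_refined_iff) blast+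
    show "?B \<subseteq> ?c ` ?A"
    proof clarify
      fix i j x y assume e: "((i, j), (x, y)) \<in> ?B"
      then have "hedge I n h i j" "x \<in> \<gamma> i" "y \<in> \<gamma> j" "x < y"
        by auto
      then have "i \<in> I \<union> {n}" "j \<in> I \<union> {n}" "i < j"
        unfolding hedge_def by auto
      obtain u where u: "contract u = i" "x \<in> expand \<gamma> f u"
        using expand_lift[where \<gamma> = \<gamma>, OF f \<open>i \<in> I \<union> {n}\<close> \<open>x \<in> \<gamma> i\<close>] by blast
      obtain v where v: "contract v = j" "y \<in> expand \<gamma> f v"
        using expand_lift[where \<gamma> = \<gamma>, OF f \<open>j \<in> I \<union> {n}\<close> \<open>y \<in> \<gamma> j\<close>] by blast
      have "\<not> (u \<in> block \<and> v \<in> block)"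
        using u(1) v(1) \<open>i < j\<close> unfolding contract_def by auto
      then have "((u, v), (x, y)) \<in> ?A"
        using u v \<open>hedge I n h i j\<close> \<open>x < y\<close> by (auto simp: hedge_refined_iff)
      moreover have "((i, j), (x, y)) = ?c ((u, v), (x, y))"
        using u(1) v(1) by simp
      ultimately show "((i, j), (x, y)) \<in> ?c ` ?A"
        by (rule rev_image_eqI)
    qed
  qed
qed

lemma asc_expand:
  assumes \<gamma>: "\<gamma> \<in> proper_colorings I n h" and f: "f \<in> bijections block (\<gamma> b)"
  shows "asc I' n h' (expand \<gamma> f) = asc I n h \<gamma> + coinversions f block"
proof -
  let ?T = "ascent_pairs I' n h' (expand \<gamma> f)"
  let ?inside = "\<lambda>e. fst (fst e) \<in> block \<and> snd (fst e) \<in> block"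
  have fin: "finite ?T"
    using finite_I' expand_proper[OF \<gamma> f] by (rule finite_ascent_pairs)
  have "asc I' n h' (expand \<gamma> f) = card ?T"
    using finite_I' expand_proper[OF \<gamma> f] by (rule asc_eq_card_ascent_pairs)
  also have "?T = {e \<in> ?T. \<not> ?inside e} \<union> {e \<in> ?T. ?inside e}"
    by blast
  also have "card \<dots> = card {e \<in> ?T. \<not> ?inside e} + card {e \<in> ?T. ?inside e}"
    using fin by (intro card_Un_disjoint) auto
  also have "card {e \<in> ?T. \<not> ?inside e} = card (ascent_pairs I n h \<gamma>)"
    using bij_betw_contract_ascent_pairs[OF \<gamma> f] by (rule bij_betw_same_card)
  also have "\<dots> = asc I n h \<gamma>"
    using finite_I \<gamma> by (rule asc_eq_card_ascent_pairs[symmetric])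
  also have "card {e \<in> ?T. ?inside e} = coinversions f block"
    using f by (rule card_ascent_pairs_within_block)
  finally show ?thesis .
qed

definition collapse :: "(nat \<Rightarrow> nat set) \<Rightarrow> nat \<Rightarrow> nat set" where
  "collapse \<gamma>' v = (if v = b then (\<Union>u\<in>block. \<gamma>' u) else if v \<in> block then {} else \<gamma>' v)"

definition labels :: "(nat \<Rightarrow> nat set) \<Rightarrow> nat \<Rightarrow> nat" where
  "labels \<gamma>' = restrict (\<lambda>v. the_elem (\<gamma>' v)) block"

lemma refined_coloring_block:
  assumes "\<gamma>' \<in> proper_colorings I' n h'" "v \<in> block"
  shows "\<gamma>' v = {labels \<gamma>' v}"
proof -
  have "card (\<gamma>' v) = 1"
    using assms block_subset proper_coloringsD(3)[OF assms(1)] wt_refined_block by auto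
  then obtain x where "\<gamma>' v = {x}"
    by (auto simp: card_1_singleton_iff)
  then show ?thesis
    using assms(2) unfolding labels_def by simp
qed

lemma labels_bijection:
  assumes \<gamma>': "\<gamma>' \<in> proper_colorings I' n h'"
  shows "labels \<gamma>' \<in> bijections block (collapse \<gamma>' b)"
proof -
  have "inj_on (labels \<gamma>') block"
  proof (rule inj_onI)
    fix u v assume "u \<in> block" "v \<in> block" "labels \<gamma>' u = labels \<gamma>' v"
    then have "\<not> (\<gamma>' u \<inter> \<gamma>' v = {})"
      using refined_coloring_block[OF \<gamma>'] by simp
    then show "u = v"
      using \<open>u \<in> block\<close> \<open>v \<in> block\<close>
        proper_coloringsD(5)[OF \<gamma>', of u v] proper_coloringsD(5)[OF \<gamma>', of v u]
      unfolding hedge_refined_iff by (metis Int_commute linorder_neqE_nat)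
  qed
  moreover have "collapse \<gamma>' b = labels \<gamma>' ` block"
    using refined_coloring_block[OF \<gamma>'] unfolding collapse_def by auto
  ultimately show ?thesis
    unfolding bijections_def labels_def bij_betw_def by simp
qed

lemma collapse_lift:
  assumes "v \<in> I \<union> {n}" "x \<in> collapse \<gamma>' v"
  obtains u where "u \<in> I' \<union> {n}" "contract u = v" "x \<in> \<gamma>' u"
proof (cases "v = b")
  case True
  then obtain u where "u \<in> block" "x \<in> \<gamma>' u"
    using assms(2) unfolding collapse_def by auto
  then show ?thesis
    using that[of u] True block_subset unfolding contract_def by auto
next
  case False
  then have "v \<notin> block" "x \<in> \<gamma>' v"
    using assms vertex_in_block_iff[OF assms(1)] unfolding collapse_def by auto
  then show ?thesis
    using that[of v] assms(1) vertices_subset unfolding contract_def by auto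
qed

lemma collapse_b_proper:
  assumes \<gamma>': "\<gamma>' \<in> proper_colorings I' n h'"
  shows "finite (collapse \<gamma>' b) \<and> card (collapse \<gamma>' b) = wt I b \<and> 0 \<notin> collapse \<gamma>' b"
proof -
  have "labels \<gamma>' u \<noteq> 0" if "u \<in> block" for u
    using that block_subset proper_coloringsD(4)[OF \<gamma>', of u] refined_coloring_block[OF \<gamma>' that]
    by auto
  then have "0 \<notin> labels \<gamma>' ` block"
    by (auto simp: image_iff)
  moreover have "collapse \<gamma>' b = labels \<gamma>' ` block"
    using bijectionsD(1)[OF labels_bijection[OF \<gamma>']] by simp
  moreover have "card (labels \<gamma>' ` block) = card block"
    using bijectionsD(2)[OF labels_bijection[OF \<gamma>']] by (rule card_image)
  ultimately show ?thesis
    using finite_block card_block wt_b by simp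
qed

lemma collapse_proper:
  assumes \<gamma>': "\<gamma>' \<in> proper_colorings I' n h'"
  shows "collapse \<gamma>' \<in> proper_colorings I n h"
proof (rule proper_coloringsI)
  fix v assume "v \<notin> I \<union> {n}"
  then show "collapse \<gamma>' v = {}"
    using b_vertex refined_vertex_outside_block proper_coloringsD(1)[OF \<gamma>']
    unfolding collapse_def by auto
next
  fix v assume v: "v \<in> I \<union> {n}"
  show "finite (collapse \<gamma>' v) \<and> card (collapse \<gamma>' v) = wt I v \<and> 0 \<notin> collapse \<gamma>' v"
  proof (cases "v = b")
    case True
    then show ?thesis
      using collapse_b_proper[OF \<gamma>'] by simp
  next
    case False
    then show ?thesis
      using v vertex_in_block_iff vertices_subset proper_coloringsD(2-4)[OF \<gamma>'] wt_refined_outside_block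
      unfolding collapse_def by auto
  qed
next
  fix i j assume "hedge I n h i j"
  then have "i \<in> I \<union> {n}" "j \<in> I \<union> {n}" "i < j"
    unfolding hedge_def by auto
  show "collapse \<gamma>' i \<inter> collapse \<gamma>' j = {}"
  proof (rule equals0I)
    fix x assume "x \<in> collapse \<gamma>' i \<inter> collapse \<gamma>' j"
    then obtain u v where "contract u = i" "x \<in> \<gamma>' u" "contract v = j" "x \<in> \<gamma>' v"
      using collapse_lift[OF \<open>i \<in> I \<union> {n}\<close>] collapse_lift[OF \<open>j \<in> I \<union> {n}\<close>] by (metis IntD1 IntD2)
    moreover have "hedge I' n h' u v"
      using calculation \<open>hedge I n h i j\<close> \<open>i < j\<close>
      unfolding hedge_refined_iff contract_def by auto
    ultimately show False
      using proper_coloringsD(5)[OF \<gamma>'] by blast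
  qed
qed

lemma collapse_expand:
  assumes "\<gamma> \<in> proper_colorings I n h" "f \<in> bijections block (\<gamma> b)"
  shows "collapse (expand \<gamma> f) = \<gamma>"
proof
  fix v
  show "collapse (expand \<gamma> f) v = \<gamma> v"
    using assms b_vertex vertex_in_block_iff[of v] proper_coloringsD(1)[OF assms(1), of v] bijectionsD(1)[OF assms(2)]
    unfolding collapse_def expand_def by auto
qed

lemma labels_expand:
  assumes "f \<in> bijections block S"
  shows "labels (expand \<gamma> f) = f"
  using bijectionsD(3)[OF assms] unfolding labels_def expand_def
  by (simp add: extensional_restrict cong: restrict_cong)

lemma expand_collapse:
  assumes "\<gamma>' \<in> proper_colorings I' n h'"
  shows "expand (collapse \<gamma>') (labels \<gamma>') = \<gamma>'"
proof
  fix v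
  show "expand (collapse \<gamma>') (labels \<gamma>') v = \<gamma>' v"
    using refined_coloring_block[OF assms, of v] b_in_block
    unfolding expand_def collapse_def by auto
qed

lemma bij_betw_expand:
  "bij_betw (\<lambda>(\<gamma>, f). expand \<gamma> f)
     (SIGMA \<gamma>:{\<gamma> \<in> proper_colorings I n h. xexp I n \<gamma> = \<alpha>}. bijections block (\<gamma> b))
     {\<gamma>' \<in> proper_colorings I' n h'. xexp I' n \<gamma>' = \<alpha>}"
  (is "bij_betw ?expand ?pairs ?colorings")
proof (rule bij_betw_byWitness[where f' = "\<lambda>\<gamma>'. (collapse \<gamma>', labels \<gamma>')"])
  show "\<forall>p\<in>?pairs. (collapse (?expand p), labels (?expand p)) = p"
    using collapse_expand labels_expand by auto
  show "\<forall>\<gamma>'\<in>?colorings. ?expand (collapse \<gamma>', labels \<gamma>') = \<gamma>'"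
    using expand_collapse by auto
  show "?expand ` ?pairs \<subseteq> ?colorings"
    using expand_proper xexp_expand by auto
  show "(\<lambda>\<gamma>'. (collapse \<gamma>', labels \<gamma>')) ` ?colorings \<subseteq> ?pairs"
  proof (rule image_subsetI)
    fix \<gamma>' assume \<gamma>': "\<gamma>' \<in> ?colorings"
    then have "labels \<gamma>' \<in> bijections block (collapse \<gamma>' b)"
      by (simp add: labels_bijection)
    moreover have "xexp I n (collapse \<gamma>') = \<alpha>"
      using \<gamma>' xexp_expand[where \<gamma> = "collapse \<gamma>'", OF calculation] expand_collapse by simp
    ultimately show "(collapse \<gamma>', labels \<gamma>') \<in> ?pairs"
      using \<gamma>' collapse_proper by simp
  qed
qed

theorem csf_refined: "csf I' n h' \<alpha> = qfact (b - a) * csf I n h \<alpha>"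
proof -
  let ?P = "{\<gamma> \<in> proper_colorings I n h. xexp I n \<gamma> = \<alpha>}"
  let ?B = "\<lambda>\<gamma>. bijections block (\<gamma> b)"
  have card_b: "card (\<gamma> b) = card block" "finite (\<gamma> b)" if "\<gamma> \<in> ?P" for \<gamma>
    using that b_vertex proper_coloringsD(2,3) wt_b card_block by auto
  have "csf I' n h' \<alpha> = (\<Sum>\<gamma>\<in>?P. \<Sum>f\<in>?B \<gamma>. monom 1 (asc I' n h' ((\<lambda>(\<gamma>, f). expand \<gamma> f) (\<gamma>, f))))"
    unfolding csf_def
  proof (rule sum_bij_betw_Sigma[OF bij_betw_expand])
    fix \<gamma> assume "\<gamma> \<in> ?P"
    then show "finite (?B \<gamma>)" "?B \<gamma> \<noteq> {}"
      using card_b finite_block by (simp_all add: finite_bijections bijections_nonempty)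
  qed
  also have "\<dots> = (\<Sum>\<gamma>\<in>?P. monom 1 (asc I n h \<gamma>) * (\<Sum>f\<in>?B \<gamma>. monom 1 (coinversions f block)))"
    by (simp add: asc_expand mult_monom sum_distrib_left)
  also have "\<dots> = (\<Sum>\<gamma>\<in>?P. monom 1 (asc I n h \<gamma>) * qfact (b - a))"
    using card_b finite_block card_block by (simp add: sum_coinversions_bijections)
  also have "\<dots> = qfact (b - a) * csf I n h \<alpha>"
    unfolding csf_def by (simp add: sum_distrib_left mult.commute)
  finally show ?thesis .
qed

end

section \<open>The indices i_k\<close>

lemma idx_nth: "1 \<le> j \<Longrightarrow> j \<le> card I \<Longrightarrow> idx I n j = sorted_list_of_set I ! (j - 1)"
  unfolding idx_def by simp

lemma idx_in_I:
  assumes "finite I" "1 \<le> j" "j \<le> card I"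
  shows "idx I n j \<in> I"
  using assms nth_mem[of "j - 1" "sorted_list_of_set I"] by (simp add: idx_nth)

lemma idx_in_vertices:
  assumes "finite I" "1 \<le> j" "j \<le> card I + 1"
  shows "idx I n j \<in> I \<union> {n}"
  using assms idx_in_I[of I j n] by (cases "j \<le> card I") (auto simp: idx_def)

lemma idx_strict_mono:
  assumes I: "I \<subseteq> {1..<n}" and "0 < n" "i < j" "j \<le> card I + 1"
  shows "idx I n i < idx I n j"
proof -
  have "finite I"
    using I finite_subset by blast
  show ?thesis
  proof (cases "i = 0")
    case True
    have "idx I n j \<in> I \<union> {n}"
      using \<open>finite I\<close> assms(3,4) by (intro idx_in_vertices) auto
    then show ?thesis
      using True I \<open>0 < n\<close> \<open>i < j\<close> by (auto simp: idx_def)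
  next
    case False
    then have "idx I n i \<in> I"
      using assms(3,4) \<open>finite I\<close> by (intro idx_in_I) auto
    show ?thesis
    proof (cases "j \<le> card I")
      case True
      then show ?thesis
        using False assms(3) \<open>finite I\<close>
        by (simp add: idx_nth sorted_wrt_nth_less[OF strict_sorted_list_of_set])
    next
      case False
      then have "idx I n j = n"
        by (simp add: idx_def)
      then show ?thesis
        using \<open>idx I n i \<in> I\<close> I by auto
    qed
  qed
qed

lemma vertex_eq_idx:
  assumes "finite I" "v \<in> I \<union> {n}"
  obtains j where "1 \<le> j" "j \<le> card I + 1" "v = idx I n j"
proof (cases "v \<in> I")
  case True
  then obtain m where "m < card I" "v = sorted_list_of_set I ! m"
    using assms(1) by (metis in_set_conv_nth length_sorted_list_of_set set_sorted_list_of_set)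
  then show ?thesis
    using that[of "Suc m"] by (simp add: idx_nth)
next
  case False
  then show ?thesis
    using that[of "card I + 1"] assms(2) by (simp add: idx_def)
qed

lemma no_vertex_between_idx:
  assumes I: "I \<subseteq> {1..<n}" and "0 < n" "1 \<le> k" "k \<le> card I + 1" "v \<in> I \<union> {n}"
  shows "v \<le> idx I n (k - 1) \<or> idx I n k \<le> v"
proof -
  have "finite I"
    using I finite_subset by blast
  then obtain j where j: "1 \<le> j" "j \<le> card I + 1" "v = idx I n j"
    using assms(5) by (rule vertex_eq_idx)
  consider "j < k - 1" | "j = k - 1" | "j = k" | "k < j"
    by linarith
  then show ?thesis
    using idx_strict_mono[OF I \<open>0 < n\<close>] j assms(3,4) by cases (auto intro: less_imp_le)
qed

lemma block_refinement_idx: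
  assumes I: "I \<subseteq> {1..<n}" and "0 < n" "h \<in> Hmaps I n" "1 \<le> k" "k \<le> card I + 1"
  shows "block_refinement I n (idx I n (k - 1)) (idx I n k) h"
proof
  have "finite I"
    using I finite_subset by blast
  show "idx I n (k - 1) < idx I n k"
    using assms by (intro idx_strict_mono) auto
  show "idx I n k \<in> I \<union> {n}"
    using \<open>finite I\<close> assms(4,5) by (rule idx_in_vertices)
  then show "idx I n k \<le> h (idx I n k)"
    using assms(3) unfolding Hmaps_def by blast
  show "idx I n (k - 1) = 0 \<or> idx I n (k - 1) \<in> I"
    using \<open>finite I\<close> assms(4,5) idx_in_I[of I "k - 1" n] by (cases "k = 1") (auto simp: idx_def)
qed (use assms no_vertex_between_idx in \<open>auto simp: Hmaps_def\<close>)

theorem lemma4p7: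
  fixes n k :: nat and I :: "nat set" and h :: "nat \<Rightarrow> nat"
  assumes "I \<subseteq> {1..<n}"
    and "h \<in> Hmaps I n"
    and "1 \<le> k" and "k \<le> card I + 1"
  shows "csf (I \<union> {idx I n (k - 1) + 1 ..< idx I n k}) n
            (\<lambda>i. if idx I n (k - 1) < i \<and> i \<le> idx I n k then h (idx I n k) else h i) \<alpha>
         = qfact (idx I n k - idx I n (k - 1)) * csf I n h \<alpha>"
proof (cases "n = 0")
  case True
  then have "I = {}" "k = 1"
    using assms(1,3,4) by auto
  then show ?thesis
    using True by (simp add: idx_def qfact_def cong: conj_cong)
next
  case False
  then interpret block_refinement I n "idx I n (k - 1)" "idx I n k" h
    using assms by (intro block_refinement_idx) auto
  show ?thesis
    using csf_refined unfolding I'_def h'_def .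
qed

end
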